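(* For any connected non-complete graph $G$, $$\mu_t(G)\le n(G)-\gamma_c(G).$$
   Context: All graphs are finite, simple and undirected; $n(G)$ denotes the order of $G$. The connected domination number $\gamma_c(G)$ is the minimum cardinality of a dominating set $D$ of $G$ such that the induced subgraph $G[D]$ is connected. Let $G$ be a connected graph and $X\subseteq V(G)$. Two vertices $x,y\in V(G)$ are $X$-visible if there exists a shortest $x,y$-path in $G$ none of whose internal vertices (i.e., vertices other than $x$ and $y$) belongs to $X$. The set $X$ is a total mutual-visibility set of $G$ if every two vertices of $G$ are $X$-visible (the empty set is allowed). The total mutual-visibility number $\mu_t(G)$ is the maximum cardinality of a total mutual-visibility set of $G$. *)

theory Defs
  imports Main
begin

definition simple_graph :: "'a set \<Rightarrow> ('a \<Rightarrow> 'a \<Rightarrow> bool) \<Rightarrow> bool" where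
  "simple_graph V E \<longleftrightarrow> finite V \<and> (\<forall>x y. E x y \<longrightarrow> x \<in> V \<and> y \<in> V)
     \<and> (\<forall>x y. E x y \<longrightarrow> E y x) \<and> (\<forall>x. \<not> E x x)"

(* a walk given as its nonempty list of vertices; its length is (length xs - 1) edges *)
definition walk :: "'a set \<Rightarrow> ('a \<Rightarrow> 'a \<Rightarrow> bool) \<Rightarrow> 'a list \<Rightarrow> bool" where
  "walk V E xs \<longleftrightarrow> xs \<noteq> [] \<and> set xs \<subseteq> V \<and> (\<forall>i. Suc i < length xs \<longrightarrow> E (xs ! i) (xs ! Suc i))"

definition walk_betw :: "'a set \<Rightarrow> ('a \<Rightarrow> 'a \<Rightarrow> bool) \<Rightarrow> 'a \<Rightarrow> 'a list \<Rightarrow> 'a \<Rightarrow> bool" where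
  "walk_betw V E x xs y \<longleftrightarrow> walk V E xs \<and> hd xs = x \<and> last xs = y"

definition connected_graph :: "'a set \<Rightarrow> ('a \<Rightarrow> 'a \<Rightarrow> bool) \<Rightarrow> bool" where
  "connected_graph V E \<longleftrightarrow> V \<noteq> {} \<and> (\<forall>x\<in>V. \<forall>y\<in>V. \<exists>xs. walk_betw V E x xs y)"

definition complete_graph :: "'a set \<Rightarrow> ('a \<Rightarrow> 'a \<Rightarrow> bool) \<Rightarrow> bool" where
  "complete_graph V E \<longleftrightarrow> (\<forall>x\<in>V. \<forall>y\<in>V. x \<noteq> y \<longrightarrow> E x y)"

definition dist :: "'a set \<Rightarrow> ('a \<Rightarrow> 'a \<Rightarrow> bool) \<Rightarrow> 'a \<Rightarrow> 'a \<Rightarrow> nat" where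
  "dist V E x y = (LEAST n. \<exists>xs. walk_betw V E x xs y \<and> length xs = Suc n)"

definition shortest_path :: "'a set \<Rightarrow> ('a \<Rightarrow> 'a \<Rightarrow> bool) \<Rightarrow> 'a \<Rightarrow> 'a list \<Rightarrow> 'a \<Rightarrow> bool" where
  "shortest_path V E x xs y \<longleftrightarrow> walk_betw V E x xs y \<and> length xs = Suc (dist V E x y)"

definition internal :: "'a list \<Rightarrow> 'a set" where
  "internal xs = set (butlast (tl xs))"

definition visible :: "'a set \<Rightarrow> ('a \<Rightarrow> 'a \<Rightarrow> bool) \<Rightarrow> 'a set \<Rightarrow> 'a \<Rightarrow> 'a \<Rightarrow> bool" where
  "visible V E X x y \<longleftrightarrow> (\<exists>xs. shortest_path V E x xs y \<and> internal xs \<inter> X = {})"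

definition total_mv_set :: "'a set \<Rightarrow> ('a \<Rightarrow> 'a \<Rightarrow> bool) \<Rightarrow> 'a set \<Rightarrow> bool" where
  "total_mv_set V E X \<longleftrightarrow> X \<subseteq> V \<and> (\<forall>x\<in>V. \<forall>y\<in>V. visible V E X x y)"

definition mu_t :: "'a set \<Rightarrow> ('a \<Rightarrow> 'a \<Rightarrow> bool) \<Rightarrow> nat" where
  "mu_t V E = Max {card X | X. total_mv_set V E X}"

definition dominating :: "'a set \<Rightarrow> ('a \<Rightarrow> 'a \<Rightarrow> bool) \<Rightarrow> 'a set \<Rightarrow> bool" where
  "dominating V E D \<longleftrightarrow> D \<subseteq> V \<and> (\<forall>v\<in>V. v \<in> D \<or> (\<exists>u\<in>D. E u v))"

definition induced :: "('a \<Rightarrow> 'a \<Rightarrow> bool) \<Rightarrow> 'a set \<Rightarrow> 'a \<Rightarrow> 'a \<Rightarrow> bool" where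
  "induced E D = (\<lambda>x y. x \<in> D \<and> y \<in> D \<and> E x y)"

definition connected_dominating :: "'a set \<Rightarrow> ('a \<Rightarrow> 'a \<Rightarrow> bool) \<Rightarrow> 'a set \<Rightarrow> bool" where
  "connected_dominating V E D \<longleftrightarrow> dominating V E D \<and> connected_graph D (induced E D)"

definition gamma_c :: "'a set \<Rightarrow> ('a \<Rightarrow> 'a \<Rightarrow> bool) \<Rightarrow> nat" where
  "gamma_c V E = Min {card D | D. connected_dominating V E D}"

end

theory Submission
  imports Defs
begin

text \<open>The complement of a total mutual-visibility set \<open>X\<close> is a connected dominating set.
  If \<open>u\<close> and \<open>w\<close> are distinct and non-adjacent, a shortest \<open>u,w\<close>-path avoiding \<open>X\<close> internally
  has at least two edges, so its second vertex is a neighbour of \<open>u\<close> outside \<open>X\<close>. A vertex of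
  \<open>X\<close> with a non-neighbour is thus dominated; a universal vertex of \<open>X\<close> is adjacent to the
  neighbour outside \<open>X\<close> of any non-adjacent pair, which exists as the graph is not complete.
  Two vertices outside \<open>X\<close> are joined by a shortest path whose internal vertices avoid \<open>X\<close>,
  so the whole path lies in \<open>V - X\<close>.\<close>

lemma shortest_path_exists:
  assumes "connected_graph V E" "x \<in> V" "y \<in> V"
  obtains xs where "shortest_path V E x xs y"
proof -
  obtain xs where w: "walk_betw V E x xs y"
    using assms unfolding connected_graph_def by blast
  then have "xs \<noteq> []" unfolding walk_betw_def walk_def by auto
  let ?P = "\<lambda>n. \<exists>xs. walk_betw V E x xs y \<and> length xs = Suc n"
  have "?P (length xs - 1)" using w \<open>xs \<noteq> []\<close> by (intro exI[of _ xs]) auto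
  then have "?P (Least ?P)" by (rule LeastI)
  then show ?thesis using that unfolding shortest_path_def dist_def by blast
qed

lemma total_mv_set_empty:
  assumes "connected_graph V E"
  shows "total_mv_set V E {}"
  unfolding total_mv_set_def visible_def
  using shortest_path_exists[OF assms] by (metis Int_empty_right empty_subsetI)

lemma walk_nonadjacent_length_ge_3:
  assumes "walk V E xs" "hd xs = u" "last xs = w" "u \<noteq> w" "\<not> E u w"
  shows "length xs \<ge> 3"
proof -
  have "xs \<noteq> []" using assms(1) unfolding walk_def by auto
  then have u: "xs ! 0 = u" and w: "xs ! (length xs - 1) = w"
    using assms(2,3) by (simp_all add: hd_conv_nth last_conv_nth)
  have "length xs \<noteq> 1" using u w assms(4) by auto
  moreover have "length xs \<noteq> 2"
  proof
    assume "length xs = 2"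
    then have "E (xs ! 0) (xs ! 1)" using assms(1) unfolding walk_def by auto
    then show False using u w \<open>length xs = 2\<close> assms(5) by simp
  qed
  ultimately show ?thesis using \<open>xs \<noteq> []\<close> by (cases "length xs") auto
qed

lemma nth_one_in_internal:
  assumes "length xs \<ge> 3"
  shows "xs ! 1 \<in> internal xs"
proof -
  have "butlast (tl xs) ! 0 \<in> set (butlast (tl xs))"
    using assms by (intro nth_mem) simp
  moreover have "butlast (tl xs) ! 0 = xs ! 1"
    using assms by (simp add: nth_butlast nth_tl)
  ultimately show ?thesis unfolding internal_def by simp
qed

lemma set_subset_ends_internal:
  assumes "xs \<noteq> []"
  shows "set xs \<subseteq> {hd xs, last xs} \<union> internal xs"
proof (cases "tl xs = []")
  case True
  then show ?thesis using assms by (cases xs) auto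
next
  case False
  then have "set (tl xs) = set (butlast (tl xs)) \<union> {last (tl xs)}"
    by (metis append_butlast_last_id set_append empty_set list.simps(15) Un_insert_right
        Un_empty_right)
  then show ?thesis using assms False unfolding internal_def
    by (cases xs) auto
qed

lemma walk_induced:
  assumes "walk V E xs" "set xs \<subseteq> D"
  shows "walk D (induced E D) xs"
  using assms unfolding walk_def induced_def
  by (auto dest: Suc_lessD intro!: nth_mem)

lemma total_mv_set_nonadjacent_neighbour:
  assumes X: "total_mv_set V E X"
    and uw: "u \<in> V" "w \<in> V" "u \<noteq> w" "\<not> E u w"
  shows "\<exists>z\<in>V - X. E u z"
proof -
  obtain xs where sp: "shortest_path V E u xs w" and int: "internal xs \<inter> X = {}"
    using X uw(1,2) unfolding total_mv_set_def visible_def by blast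
  have wk: "walk V E xs" "hd xs = u" "last xs = w"
    using sp unfolding shortest_path_def walk_betw_def by auto
  have len: "length xs \<ge> 3" using walk_nonadjacent_length_ge_3[OF wk uw(3,4)] .
  have "E (xs ! 0) (xs ! 1)" and "xs ! 1 \<in> V"
    using wk(1) len unfolding walk_def by (auto intro: nth_mem)
  moreover have "xs ! 0 = u" using wk(2) len by (cases xs) auto
  moreover have "xs ! 1 \<notin> X" using nth_one_in_internal[OF len] int by blast
  ultimately show ?thesis by auto
qed

lemma dominating_compl_total_mv_set:
  assumes sg: "simple_graph V E" and nc: "\<not> complete_graph V E"
    and X: "total_mv_set V E X"
  shows "dominating V E (V - X)"
  unfolding dominating_def
proof (intro conjI ballI)
  fix x assume x: "x \<in> V"
  show "x \<in> V - X \<or> (\<exists>z\<in>V - X. E z x)"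
  proof (cases "x \<in> X")
    case True
    have "\<exists>z\<in>V - X. E x z"
    proof (cases "\<exists>v\<in>V. v \<noteq> x \<and> \<not> E x v")
      case True
      then obtain v where "v \<in> V" "x \<noteq> v" "\<not> E x v" by blast
      then show ?thesis using total_mv_set_nonadjacent_neighbour[OF X x] by blast
    next
      case universal: False
      obtain u w where "u \<in> V" "w \<in> V" "u \<noteq> w" "\<not> E u w"
        using nc unfolding complete_graph_def by blast
      then obtain z where "z \<in> V - X" "E u z"
        using total_mv_set_nonadjacent_neighbour[OF X] by blast
      moreover have "z \<noteq> x" using \<open>z \<in> V - X\<close> \<open>x \<in> X\<close> by blast
      ultimately show ?thesis using universal by blast
    qed
    moreover have "\<And>y. E x y \<Longrightarrow> E y x" using sg unfolding simple_graph_def by blast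
    ultimately show ?thesis by blast
  qed (use x in blast)
qed blast

lemma connected_compl_total_mv_set:
  assumes X: "total_mv_set V E X" and ne: "V - X \<noteq> {}"
  shows "connected_graph (V - X) (induced E (V - X))"
  unfolding connected_graph_def
proof (intro conjI ballI)
  fix a b assume a: "a \<in> V - X" and b: "b \<in> V - X"
  obtain xs where sp: "shortest_path V E a xs b" and int: "internal xs \<inter> X = {}"
    using X a b unfolding total_mv_set_def visible_def by blast
  have wk: "walk V E xs" "hd xs = a" "last xs = b"
    using sp unfolding shortest_path_def walk_betw_def by auto
  have "xs \<noteq> []" using wk(1) unfolding walk_def by auto
  have "internal xs \<subseteq> set xs" unfolding internal_def
    by (cases xs) (auto dest: in_set_butlastD)
  then have "set xs \<subseteq> V - X"
    using set_subset_ends_internal[OF \<open>xs \<noteq> []\<close>] wk a b int unfolding walk_def by auto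
  then show "\<exists>xs. walk_betw (V - X) (induced E (V - X)) a xs b"
    using walk_induced[OF wk(1)] wk(2,3) unfolding walk_betw_def by blast
qed (rule ne)

lemma connected_dominating_compl_total_mv_set:
  assumes "simple_graph V E" "\<not> complete_graph V E" and X: "total_mv_set V E X"
  shows "connected_dominating V E (V - X)"
proof -
  obtain u w where "u \<in> V" "w \<in> V" "u \<noteq> w" "\<not> E u w"
    using assms(2) unfolding complete_graph_def by blast
  then have "V - X \<noteq> {}" using total_mv_set_nonadjacent_neighbour[OF X] by blast
  then show ?thesis unfolding connected_dominating_def
    using dominating_compl_total_mv_set[OF assms] connected_compl_total_mv_set[OF X] by blast
qed

lemma mu_t_attained:
  assumes "finite V" "connected_graph V E"
  obtains X where "total_mv_set V E X" "mu_t V E = card X"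
proof -
  let ?S = "{card X | X. total_mv_set V E X}"
  have "?S \<subseteq> {..card V}"
    unfolding total_mv_set_def using assms(1) by (auto intro: card_mono)
  then have "finite ?S" by (rule finite_subset) simp
  moreover have "?S \<noteq> {}" using total_mv_set_empty[OF assms(2)] by blast
  ultimately have "mu_t V E \<in> ?S" unfolding mu_t_def by (rule Max_in)
  then show ?thesis using that by blast
qed

lemma gamma_c_le_card:
  assumes "finite V" "connected_dominating V E D"
  shows "gamma_c V E \<le> card D"
proof -
  let ?T = "{card D | D. connected_dominating V E D}"
  have "?T \<subseteq> {..card V}"
    unfolding connected_dominating_def dominating_def using assms(1) by (auto intro: card_mono)
  then have "finite ?T" by (rule finite_subset) simp
  then show ?thesis unfolding gamma_c_def using assms(2) by (intro Min_le) blast+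
qed

theorem theorem2p4:
  fixes V :: "'a set" and E :: "'a \<Rightarrow> 'a \<Rightarrow> bool"
  assumes "simple_graph V E"
    and "connected_graph V E"
    and "\<not> complete_graph V E"
  shows "mu_t V E \<le> card V - gamma_c V E"
proof -
  have fin: "finite V" using assms(1) unfolding simple_graph_def by blast
  obtain X where X: "total_mv_set V E X" "mu_t V E = card X"
    using mu_t_attained[OF fin assms(2)] .
  have XV: "X \<subseteq> V" using X(1) unfolding total_mv_set_def by blast
  have "gamma_c V E \<le> card (V - X)"
    using gamma_c_le_card[OF fin connected_dominating_compl_total_mv_set[OF assms(1,3) X(1)]] .
  moreover have "card (V - X) = card V - card X"
    using XV fin by (simp add: card_Diff_subset finite_subset)
  moreover have "card X \<le> card V" using XV fin by (simp add: card_mono)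
  ultimately show ?thesis using X(2) by linarith
qed

end
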